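(* For $(\varphi,\xi,\theta)$ let $C_\theta=\cos\theta\,(|\uparrow\rangle\langle\uparrow|+|\downarrow\rangle\langle\downarrow|)+\sin\theta\,(|\uparrow\rangle\langle\downarrow|-|\downarrow\rangle\langle\uparrow|)$ and $\gamma_{\varphi,\xi}=\cos\varphi\,|\uparrow\rangle+\sin\varphi\,e^{i\xi}|\downarrow\rangle$. Let $$S=\{(\varphi,0,\theta):\theta\in(0,\pi/2),\ \varphi\in[\theta/2,\ \pi/4+\theta/2]\}\ \cup\ \{(\varphi,\pi,\theta):\theta\in(0,\pi/2),\ \varphi\in(\pi/4-\theta/2,\ (\pi-\theta)/2]\}.$$ Then: (i) for every coin setup $(C,\gamma)$ with $C$ a non-trivial coin there is $(\varphi,\xi,\theta)\in S$ with $(C,\gamma)\sim_l(C_\theta,\gamma_{\varphi,\xi})$; (ii) if $s,s'\in S$ give asymptotically distributionally equivalent setups $(C_\theta,\gamma_{\varphi,\xi})\sim_l(C_{\theta'},\gamma_{\varphi',\xi'})$, then $s=s'$. Thus $(\varphi,\xi,\theta)\mapsto(C_\theta,\gamma_{\varphi,\xi})$ is a bijection from $S$ onto the asymptotic distributional equivalence classes of coin setups with non-trivial coins.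
   Context: Let $\mathcal{H}=\ell^2(\mathbb{Z})\otimes\mathbb{C}^2$, with position basis $\{|j\rangle: j\in\mathbb{Z}\}$ and coin basis $\{|\uparrow\rangle,|\downarrow\rangle\}$. A (quantum) coin is any $C\in U(2)$, written $C=a|\uparrow\rangle\langle\uparrow|+b|\uparrow\rangle\langle\downarrow|+c|\downarrow\rangle\langle\uparrow|+d|\downarrow\rangle\langle\downarrow|$; it is trivial iff $abcd=0$ and non-trivial otherwise. The walk operator is $W(C)=T(\mathbb{1}\otimes C)$ with $T=\sum_{j}|j+1\rangle\langle j|\otimes|\uparrow\rangle\langle\uparrow|+\sum_{j}|j-1\rangle\langle j|\otimes|\downarrow\rangle\langle\downarrow|$. A coin setup is a pair $(C,\gamma)$, $C\in U(2)$, $\gamma=\alpha|\uparrow\rangle+\beta|\downarrow\rangle$ a unit vector; $p_{(C,\gamma)}(j,n)=\langle\psi_n|(|j\rangle\langle j|\otimes\mathbb{1})|\psi_n\rangle$ with $\psi_n=W(C)^n(|0\rangle\otimes\gamma)$. For a setup $\mathcal{C}$ let $X_n$ be a $\mathbb{Z}$-valued random variable with law $p_{\mathcal{C}}(\cdot,n)$. Known fact (Konno): if $C$ is non-trivial, $X_n/n$ converges in distribution to the law with density $f_{\mathcal{C}}(x)=\dfrac{\sqrt{1-|a|^2}\,(1-\lambda_{\mathcal{C}}x)}{\pi(1-x^2)\sqrt{|a|^2-x^2}}$ for $x\in(-|a|,|a|)$ and $0$ elsewhere, where $\lambda_{\mathcal{C}}=|\alpha|^2-|\beta|^2+\dfrac{a\alpha\overline{b\beta}+\overline{a\alpha}b\beta}{|a|^2}$.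 Two setups $\mathcal{C}_1,\mathcal{C}_2$ with non-trivial coins are asymptotically distributionally equivalent, $\mathcal{C}_1\sim_l\mathcal{C}_2$, iff $f_{\mathcal{C}_1}=f_{\mathcal{C}_2}$. *)

theory Defs
  imports Complex_Main
begin

(* A coin C = a|u><u| + b|u><d| + c|d><u| + d|d><d| is represented by its four
  matrix entries (a,b,c,d); a coin state gamma = alpha|u> + beta|d> by (alpha,beta). *)

type_synonym coin = "complex \<times> complex \<times> complex \<times> complex"
type_synonym cstate = "complex \<times> complex"
type_synonym csetup = "coin \<times> cstate"

definition is_coin :: "coin \<Rightarrow> bool" where
  "is_coin C = (case C of (a,b,c,d) \<Rightarrow>
      cnj a * a + cnj c * c = 1 \<and> cnj b * b + cnj d * d = 1 \<and> cnj a * b + cnj c * d = 0)"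

definition nontrivial_coin :: "coin \<Rightarrow> bool" where
  "nontrivial_coin C = (case C of (a,b,c,d) \<Rightarrow> a * b * c * d \<noteq> 0)"

definition unit_state :: "cstate \<Rightarrow> bool" where
  "unit_state g = (case g of (\<alpha>,\<beta>) \<Rightarrow> (cmod \<alpha>)\<^sup>2 + (cmod \<beta>)\<^sup>2 = 1)"

(* lambda_C; the numerator a alpha conj(b beta) + conj(a alpha) b beta is real,
  we take its real part. *)
definition lam :: "csetup \<Rightarrow> real" where
  "lam S = (case S of ((a,b,c,d),(\<alpha>,\<beta>)) \<Rightarrow>
      (cmod \<alpha>)\<^sup>2 - (cmod \<beta>)\<^sup>2
      + Re (a * \<alpha> * cnj (b * \<beta>) + cnj (a * \<alpha>) * b * \<beta>) / (cmod a)\<^sup>2)"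

definition limit_density :: "csetup \<Rightarrow> real \<Rightarrow> real" where
  "limit_density S x = (case S of ((a,b,c,d),g) \<Rightarrow>
      if - cmod a < x \<and> x < cmod a then
        sqrt (1 - (cmod a)\<^sup>2) * (1 - lam S * x) /
          (pi * (1 - x\<^sup>2) * sqrt ((cmod a)\<^sup>2 - x\<^sup>2))
      else 0)"

definition asym_equiv :: "csetup \<Rightarrow> csetup \<Rightarrow> bool" where
  "asym_equiv S1 S2 = (limit_density S1 = limit_density S2)"

definition coin_theta :: "real \<Rightarrow> coin" where
  "coin_theta \<theta> = (complex_of_real (cos \<theta>), complex_of_real (sin \<theta>),
                    - complex_of_real (sin \<theta>), complex_of_real (cos \<theta>))"

definition gamma_phi_xi :: "real \<Rightarrow> real \<Rightarrow> cstate" where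
  "gamma_phi_xi \<phi> \<xi> = (complex_of_real (cos \<phi>),
                         complex_of_real (sin \<phi>) * exp (\<i> * complex_of_real \<xi>))"

definition param_csetup :: "real \<times> real \<times> real \<Rightarrow> csetup" where
  "param_csetup s = (case s of (\<phi>,\<xi>,\<theta>) \<Rightarrow> (coin_theta \<theta>, gamma_phi_xi \<phi> \<xi>))"

definition S_param :: "(real \<times> real \<times> real) set" where
  "S_param =
     {(\<phi>, 0, \<theta>) | \<phi> \<theta>. 0 < \<theta> \<and> \<theta> < pi/2 \<and> \<theta>/2 \<le> \<phi> \<and> \<phi> \<le> pi/4 + \<theta>/2}
   \<union> {(\<phi>, pi, \<theta>) | \<phi> \<theta>. 0 < \<theta> \<and> \<theta> < pi/2 \<and> pi/4 - \<theta>/2 < \<phi> \<and> \<phi> \<le> (pi - \<theta>)/2}"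

end

theory Submission
  imports Defs
begin

text \<open>Konno's density depends on a setup only through \<open>A = |a|\<close> and \<open>\<lambda>\<close>, and it determines
  both: its support is \<open>(-A, A)\<close>, and at a fixed point it is affine in \<open>\<lambda>\<close>. For a non-trivial
  coin \<open>0 < A < 1\<close>, and Cauchy-Schwarz gives \<open>|\<lambda>| A \<le> 1\<close>, so the classes correspond to the
  pairs \<open>(arccos A, arccos (\<lambda> A)) \<in> (0, pi/2) \<times> [0, pi]\<close>. For the setup with parameters
  \<open>(\<phi>, \<xi>, \<theta>)\<close> one has \<open>A = cos \<theta>\<close> and \<open>\<lambda> cos \<theta> = cos 2\<phi> cos \<theta> + sin 2\<phi> sin \<theta> cos \<xi>\<close>,
  which is \<open>cos (2\<phi> - \<theta>)\<close> resp. \<open>cos (2\<phi> + \<theta>)\<close> on the two branches of S; thus S is exactly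
  the image of \<open>(0, pi/2) \<times> [0, pi]\<close> under the corresponding chart.\<close>

definition konno_density :: "real \<Rightarrow> real \<Rightarrow> real \<Rightarrow> real" where
  "konno_density A L x = (if - A < x \<and> x < A then sqrt (1 - A\<^sup>2) * (1 - L * x) /
      (pi * (1 - x\<^sup>2) * sqrt (A\<^sup>2 - x\<^sup>2)) else 0)"

lemma limit_density_eq_konno_density:
  "limit_density ((a, b, c, d), g) = konno_density (cmod a) (lam ((a, b, c, d), g))"
  by (simp add: limit_density_def fun_eq_iff konno_density_def)

lemma konno_density_pos:
  assumes "0 < A" "A < 1" "\<bar>L\<bar> * A \<le> 1" "\<bar>x\<bar> < A"
  shows "0 < konno_density A L x"
proof -
  have "\<bar>L * x\<bar> \<le> \<bar>L\<bar> * A"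
    using assms by (simp add: abs_mult mult_left_mono)
  moreover have "\<bar>L * x\<bar> \<noteq> 1"
  proof (cases "L = 0")
    case False
    then have "\<bar>L\<bar> * \<bar>x\<bar> < \<bar>L\<bar> * A"
      using assms by simp
    then show ?thesis
      using assms by (simp add: abs_mult)
  qed simp
  ultimately have "0 < 1 - L * x"
    using assms by linarith
  moreover have "x\<^sup>2 < A\<^sup>2" "A\<^sup>2 < 1"
    using assms power_strict_mono[of "\<bar>x\<bar>" A 2] power_strict_mono[of A 1 2] by auto
  moreover have "x\<^sup>2 < 1"
    using calculation(2,3) by linarith
  ultimately show ?thesis
    using assms by (simp add: konno_density_def abs_less_iff)
qed

lemma konno_density_support:
  assumes "0 < A" "A < 1" "\<bar>L\<bar> * A \<le> 1"
  shows "{x. konno_density A L x \<noteq> 0} = {-A<..<A}"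
proof (rule set_eqI)
  fix x
  show "x \<in> {x. konno_density A L x \<noteq> 0} \<longleftrightarrow> x \<in> {-A<..<A}"
  proof (cases "\<bar>x\<bar> < A")
    case True
    then show ?thesis
      using konno_density_pos[OF assms True] by (simp add: abs_less_iff)
  next
    case False
    then have "\<not> (- A < x \<and> x < A)"
      by auto
    then show ?thesis
      by (auto simp: konno_density_def)
  qed
qed

lemma konno_density_inj:
  assumes eq: "konno_density A L = konno_density A' L'"
    and "0 < A" "A < 1" "\<bar>L\<bar> * A \<le> 1" and "0 < A'" "A' < 1" "\<bar>L'\<bar> * A' \<le> 1"
  shows "A = A'" "L = L'"
proof -
  have "{-A<..<A} = {-A'<..<A'}"
    using konno_density_support[of A L] konno_density_support[of A' L'] eq assms by simp
  then show same_support: "A = A'"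
    by (metis assms(2,5) cSup_greaterThanLessThan neg_less_0_iff_less order.strict_trans)
  define x where "x = A / 2"
  have x: "\<bar>x\<bar> < A" "x \<noteq> 0"
    using assms by (auto simp: x_def)
  have affine_in_L: "konno_density A M x = konno_density A 0 x * (1 - M * x)" for M
    using x by (simp add: konno_density_def abs_less_iff)
  have "konno_density A 0 x * (1 - L * x) = konno_density A 0 x * (1 - L' * x)"
    using eq same_support affine_in_L by metis
  moreover have "0 < konno_density A 0 x"
    using assms x by (intro konno_density_pos) auto
  ultimately show "L = L'"
    using x by simp
qed

lemma is_coin_norm_sum:
  assumes "is_coin (a, b, c, d)"
  shows "(cmod a)\<^sup>2 + (cmod b)\<^sup>2 = 1"
proof -
  have norm_sq: "cnj z * z = complex_of_real ((cmod z)\<^sup>2)" for z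
    by (metis complex_norm_square mult.commute)
  have "complex_of_real ((cmod a)\<^sup>2 + (cmod c)\<^sup>2) = 1"
    "complex_of_real ((cmod b)\<^sup>2 + (cmod d)\<^sup>2) = 1"
    using assms unfolding is_coin_def norm_sq by simp_all
  then have columns: "(cmod a)\<^sup>2 + (cmod c)\<^sup>2 = 1" "(cmod b)\<^sup>2 + (cmod d)\<^sup>2 = 1"
    using of_real_eq_1_iff by blast+
  have "cnj a * b = - (cnj c * d)"
    using assms unfolding is_coin_def by (simp add: eq_neg_iff_add_eq_0)
  then have "cmod a * cmod b = cmod c * cmod d"
    by (metis norm_minus_cancel norm_mult complex_mod_cnj)
  then have "(cmod a)\<^sup>2 * (cmod b)\<^sup>2 = (1 - (cmod a)\<^sup>2) * (1 - (cmod b)\<^sup>2)"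
    using columns by (metis add_diff_cancel_left' power_mult_distrib)
  then show ?thesis
    by (simp add: algebra_simps)
qed

lemma nontrivial_coin_norm_bounds:
  assumes "is_coin (a, b, c, d)" "nontrivial_coin (a, b, c, d)"
  shows "0 < cmod a" "cmod a < 1"
proof -
  have "a \<noteq> 0" "b \<noteq> 0"
    using assms(2) by (auto simp: nontrivial_coin_def)
  then have "0 < cmod a" "0 < (cmod b)\<^sup>2"
    by auto
  then have "0 < cmod a" "(cmod a)\<^sup>2 < 1"
    using is_coin_norm_sum[OF assms(1)] by linarith+
  then show "0 < cmod a" "cmod a < 1"
    by (metis abs_norm_cancel abs_square_less_1)+
qed

lemma lam_norm_bound:
  assumes "is_coin (a, b, c, d)" "a \<noteq> 0" "unit_state (\<alpha>, \<beta>)"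
  shows "\<bar>lam ((a, b, c, d), (\<alpha>, \<beta>))\<bar> * cmod a \<le> 1"
proof -
  define A where "A = cmod a"
  define B where "B = cmod b"
  define p where "p = cmod \<alpha>"
  define q where "q = cmod \<beta>"
  define z where "z = a * \<alpha> * cnj (b * \<beta>)"
  have A: "0 < A" "A\<^sup>2 + B\<^sup>2 = 1"
    using assms is_coin_norm_sum[OF assms(1)] by (simp_all add: A_def B_def)
  have pq: "p\<^sup>2 + q\<^sup>2 = 1"
    using assms(3) by (simp add: unit_state_def p_def q_def)
  have "a * \<alpha> * cnj (b * \<beta>) + cnj (a * \<alpha>) * b * \<beta> = z + cnj z"
    by (simp add: z_def mult.assoc mult.left_commute)
  then have "lam ((a, b, c, d), (\<alpha>, \<beta>)) = p\<^sup>2 - q\<^sup>2 + Re (z + cnj z) / A\<^sup>2"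
    by (simp only: lam_def prod.case A_def p_def q_def)
  also have "Re (z + cnj z) = 2 * Re z"
    by simp
  finally have "\<bar>lam ((a, b, c, d), (\<alpha>, \<beta>))\<bar> * A \<le> (\<bar>p\<^sup>2 - q\<^sup>2\<bar> + 2 * \<bar>Re z\<bar> / A\<^sup>2) * A"
    using A by (intro mult_right_mono) (auto simp: abs_mult intro!: order.trans[OF abs_triangle_ineq])
  also have "\<dots> \<le> (\<bar>p\<^sup>2 - q\<^sup>2\<bar> + 2 * (A * B * p * q) / A\<^sup>2) * A"
    using abs_Re_le_cmod[of z] A
    by (intro mult_right_mono add_left_mono divide_right_mono)
      (auto simp: z_def norm_mult A_def B_def p_def q_def mult_ac)
  also have "\<dots> = A * \<bar>p\<^sup>2 - q\<^sup>2\<bar> + B * (2 * p * q)"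
    using A by (simp add: field_simps power2_eq_square)
  also have "\<dots> \<le> 1"
  proof -
    \<comment> \<open>Cauchy-Schwarz for the unit vectors (A, B) and (u, v).\<close>
    define u v where "u = \<bar>p\<^sup>2 - q\<^sup>2\<bar>" and "v = 2 * p * q"
    have "u\<^sup>2 + v\<^sup>2 = (p\<^sup>2 + q\<^sup>2)\<^sup>2"
      by (simp add: u_def v_def power2_eq_square algebra_simps)
    then have "(A - u)\<^sup>2 + (B - v)\<^sup>2 = 2 - 2 * (A * u + B * v)"
      using A pq by (simp add: power2_diff algebra_simps)
    moreover have "0 \<le> (A - u)\<^sup>2 + (B - v)\<^sup>2"
      by simp
    ultimately show ?thesis
      by (simp add: u_def v_def)
  qed
  finally show ?thesis
    by (simp add: A_def)
qed

lemma lam_param_csetup: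
  assumes "cos \<theta> \<noteq> 0"
  shows "lam (param_csetup (\<phi>, \<xi>, \<theta>)) * cos \<theta> = cos (2 * \<phi>) * cos \<theta> + sin (2 * \<phi>) * sin \<theta> * cos \<xi>"
proof -
  have "lam (param_csetup (\<phi>, \<xi>, \<theta>)) =
      (cos \<phi>)\<^sup>2 - (sin \<phi>)\<^sup>2 + 2 * cos \<theta> * sin \<theta> * cos \<phi> * sin \<phi> * cos \<xi> / (cos \<theta>)\<^sup>2"
    by (simp add: lam_def param_csetup_def coin_theta_def gamma_phi_xi_def norm_mult power2_eq_square Re_exp)
  then show ?thesis
    using assms unfolding cos_double sin_double by (simp add: field_simps power2_eq_square)
qed

lemma limit_density_param_csetup:
  "limit_density (param_csetup (\<phi>, \<xi>, \<theta>)) = konno_density \<bar>cos \<theta>\<bar> (lam (param_csetup (\<phi>, \<xi>, \<theta>)))"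
  by (simp add: param_csetup_def coin_theta_def limit_density_eq_konno_density)

text \<open>Coordinates on S: \<open>\<theta>\<close> and the angle \<open>\<psi>\<close> with \<open>cos \<psi> = \<lambda> cos \<theta>\<close>.
  The branch \<open>\<xi> = 0\<close> of S is \<open>\<psi> = 2\<phi> - \<theta> \<le> pi/2\<close>, the branch \<open>\<xi> = pi\<close> is \<open>\<psi> = 2\<phi> + \<theta> > pi/2\<close>.\<close>

fun S_chart :: "real \<times> real \<Rightarrow> real \<times> real \<times> real" where
  "S_chart (\<theta>, \<psi>) = (if \<psi> \<le> pi/2 then ((\<theta> + \<psi>) / 2, 0, \<theta>) else ((\<psi> - \<theta>) / 2, pi, \<theta>))"

lemma S_param_eq_image_S_chart: "S_param = S_chart ` ({0<..<pi/2} \<times> {0..pi})"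
proof
  show "S_param \<subseteq> S_chart ` ({0<..<pi/2} \<times> {0..pi})"
  proof
    fix s assume "s \<in> S_param"
    then consider \<phi> \<theta> where "s = (\<phi>, 0, \<theta>)" "0 < \<theta>" "\<theta> < pi/2" "\<theta>/2 \<le> \<phi>" "\<phi> \<le> pi/4 + \<theta>/2"
      | \<phi> \<theta> where "s = (\<phi>, pi, \<theta>)" "0 < \<theta>" "\<theta> < pi/2" "pi/4 - \<theta>/2 < \<phi>" "\<phi> \<le> (pi - \<theta>)/2"
      unfolding S_param_def by blast
    then show "s \<in> S_chart ` ({0<..<pi/2} \<times> {0..pi})"
    proof cases
      case (1 \<phi> \<theta>)
      then have "s = S_chart (\<theta>, 2 * \<phi> - \<theta>)" "(\<theta>, 2 * \<phi> - \<theta>) \<in> {0<..<pi/2} \<times> {0..pi}"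
        by auto
      then show ?thesis
        by blast
    next
      case (2 \<phi> \<theta>)
      then have "s = S_chart (\<theta>, 2 * \<phi> + \<theta>)" "(\<theta>, 2 * \<phi> + \<theta>) \<in> {0<..<pi/2} \<times> {0..pi}"
        by auto
      then show ?thesis
        by blast
    qed
  qed
  show "S_chart ` ({0<..<pi/2} \<times> {0..pi}) \<subseteq> S_param"
  proof (rule image_subsetI)
    fix t assume "t \<in> {0<..<pi/2} \<times> {0..pi::real}"
    then obtain \<theta> \<psi> where t: "t = (\<theta>, \<psi>)" "0 < \<theta>" "\<theta> < pi/2" "0 \<le> \<psi>" "\<psi> \<le> pi"
      by auto
    show "S_chart t \<in> S_param"
    proof (cases "\<psi> \<le> pi/2")
      case True
      with t show ?thesis
        by (auto simp: S_param_def intro!: exI[of _ "(\<theta> + \<psi>) / 2"])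
    next
      case False
      with t show ?thesis
        by (auto simp: S_param_def intro!: exI[of _ "(\<psi> - \<theta>) / 2"])
    qed
  qed
qed

lemma limit_density_S_chart:
  assumes "0 < \<theta>" "\<theta> < pi/2"
  shows "limit_density (param_csetup (S_chart (\<theta>, \<psi>))) = konno_density (cos \<theta>) (cos \<psi> / cos \<theta>)"
proof -
  obtain \<phi> \<xi> where chart: "S_chart (\<theta>, \<psi>) = (\<phi>, \<xi>, \<theta>)"
    by (metis S_chart.simps)
  have cos_pos: "0 < cos \<theta>"
    using assms by (intro cos_gt_zero) auto
  have "lam (param_csetup (\<phi>, \<xi>, \<theta>)) * cos \<theta> = cos \<psi>"
  proof (cases "\<psi> \<le> pi/2")
    case True
    then have "2 * \<phi> = \<theta> + \<psi>" "\<xi> = 0"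
      using chart by simp_all
    then show ?thesis
      using lam_param_csetup[of \<theta> \<phi> \<xi>] cos_pos cos_diff[of "\<theta> + \<psi>" \<theta>] by simp
  next
    case False
    then have "2 * \<phi> = \<psi> - \<theta>" "\<xi> = pi"
      using chart by simp_all
    then show ?thesis
      using lam_param_csetup[of \<theta> \<phi> \<xi>] cos_pos cos_add[of "\<psi> - \<theta>" \<theta>] by simp
  qed
  then have "lam (param_csetup (\<phi>, \<xi>, \<theta>)) = cos \<psi> / cos \<theta>"
    using cos_pos by (simp add: eq_divide_eq)
  then show ?thesis
    by (simp only: chart limit_density_param_csetup abs_of_pos[OF cos_pos])
qed

lemma konno_density_eq_limit_density_S_chart:
  assumes "0 < A" "A < 1" "\<bar>L\<bar> * A \<le> 1"
  obtains t where "t \<in> {0<..<pi/2} \<times> {0..pi}"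
    "konno_density A L = limit_density (param_csetup (S_chart t))"
proof -
  have "\<bar>L * A\<bar> \<le> 1"
    using assms by (simp add: abs_mult)
  then have "-1 \<le> L * A" "L * A \<le> 1"
    by (auto simp: abs_le_iff)
  have "arccos A \<in> {0<..<pi/2}"
    using assms arccos_lt_bounded[of A] arccos_less_arccos[of 0 A] by auto
  moreover have "arccos (L * A) \<in> {0..pi}"
    using \<open>L * A \<le> 1\<close> \<open>-1 \<le> L * A\<close> arccos_bounded[of "L * A"] by auto
  moreover have "konno_density A L = konno_density (cos (arccos A)) (cos (arccos (L * A)) / cos (arccos A))"
    using assms \<open>L * A \<le> 1\<close> \<open>-1 \<le> L * A\<close> by simp
  ultimately show ?thesis
    using that limit_density_S_chart by fastforce
qed

lemma inj_on_limit_density_S_chart: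
  "inj_on (\<lambda>t. limit_density (param_csetup (S_chart t))) ({0<..<pi/2} \<times> {0..pi})"
proof (rule inj_onI)
  fix t t' :: "real \<times> real"
  assume "t \<in> {0<..<pi/2} \<times> {0..pi}" "t' \<in> {0<..<pi/2} \<times> {0..pi}"
    and eq: "limit_density (param_csetup (S_chart t)) = limit_density (param_csetup (S_chart t'))"
  then obtain \<theta> \<psi> \<theta>' \<psi>' where t: "t = (\<theta>, \<psi>)" "t' = (\<theta>', \<psi>')" and
    range: "0 < \<theta>" "\<theta> < pi/2" "0 \<le> \<psi>" "\<psi> \<le> pi" "0 < \<theta>'" "\<theta>' < pi/2" "0 \<le> \<psi>'" "\<psi>' \<le> pi"
    by auto
  have cos_bounds: "0 < cos x" "cos x < 1" "\<bar>cos y / cos x\<bar> * cos x \<le> 1"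
    if "0 < x" "x < pi/2" for x y
  proof -
    show "0 < cos x"
      using that by (intro cos_gt_zero) auto
    then show "\<bar>cos y / cos x\<bar> * cos x \<le> 1"
      by (simp add: abs_divide)
    show "cos x < 1"
      using that cos_monotone_0_pi[of 0 x] by simp
  qed
  have "konno_density (cos \<theta>) (cos \<psi> / cos \<theta>) = konno_density (cos \<theta>') (cos \<psi>' / cos \<theta>')"
    using eq range limit_density_S_chart unfolding t by metis
  then have "cos \<theta> = cos \<theta>'" "cos \<psi> / cos \<theta> = cos \<psi>' / cos \<theta>'"
    using konno_density_inj cos_bounds range by blast+
  then have "cos \<theta> = cos \<theta>'" "cos \<psi> = cos \<psi>'"
    using cos_bounds(1)[of \<theta>] range by (auto simp: divide_cancel_right)
  with range show "t = t'"
    unfolding t by (auto intro!: cos_inj_pi)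
qed

theorem theorem4:
  shows "(\<forall>C g. is_coin C \<and> nontrivial_coin C \<and> unit_state g \<longrightarrow>
            (\<exists>s\<in>S_param. asym_equiv (C, g) (param_csetup s)))
       \<and> (\<forall>s\<in>S_param. \<forall>s'\<in>S_param.
            asym_equiv (param_csetup s) (param_csetup s') \<longrightarrow> s = s')"
proof (intro conjI allI impI ballI)
  fix C :: coin and g :: cstate
  assume "is_coin C \<and> nontrivial_coin C \<and> unit_state g"
  moreover obtain a b c d \<alpha> \<beta> where C: "C = (a, b, c, d)" and "g = (\<alpha>, \<beta>)"
    by (metis prod.exhaust)
  ultimately have "0 < cmod a" "cmod a < 1" "\<bar>lam (C, g)\<bar> * cmod a \<le> 1"
    using nontrivial_coin_norm_bounds lam_norm_bound by auto
  then obtain t where "t \<in> {0<..<pi/2} \<times> {0..pi}"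
    and "konno_density (cmod a) (lam (C, g)) = limit_density (param_csetup (S_chart t))"
    by (rule konno_density_eq_limit_density_S_chart)
  then have "S_chart t \<in> S_param" "asym_equiv (C, g) (param_csetup (S_chart t))"
    unfolding S_param_eq_image_S_chart asym_equiv_def C
    by (simp_all add: limit_density_eq_konno_density)
  then show "\<exists>s\<in>S_param. asym_equiv (C, g) (param_csetup s)"
    by blast
next
  fix s s' assume "s \<in> S_param" "s' \<in> S_param" "asym_equiv (param_csetup s) (param_csetup s')"
  then show "s = s'"
    using inj_on_limit_density_S_chart unfolding S_param_eq_image_S_chart asym_equiv_def
    by (auto dest: inj_onD)
qed

end
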